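(* For all integers $m\ge 0$ and $n\ge 1$, $$\int_0^{\pi/2}x^{2m}\cos^{2n-1}(x)\,dx=\frac{(2m)!}{2}\,\frac{4^n}{n\binom{2n}{n}}\sum_{j=0}^m\frac{(-1)^j\,t_n^{\star}(\{2\}_j)}{(2m-2j)!}\left(\frac{\pi}{2}\right)^{2m-2j}.$$
   Context: For integers $n\ge 1$ and $j\ge 0$, the multiple $t$-harmonic star sum is $$t_n^{\star}(\{2\}_j)=\sum_{n\ge k_1\ge\dots\ge k_j\ge 1}\prod_{i=1}^j\frac{1}{(2k_i-1)^2},$$ with $t_n^{\star}(\{2\}_0)=1$; equivalently $t_n^{\star}(\{2\}_j)=\sum_{k=1}^n \frac{t_k^{\star}(\{2\}_{j-1})}{(2k-1)^2}$ for $j\ge1$. *)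

theory Defs
  imports "HOL-Analysis.Analysis"
begin

text \<open>Multiple t-harmonic star sum  t_n^star({2}_j), via the recursion
  t_n^star({2}_0) = 1 and t_n^star({2}_j) = sum_{k=1}^n t_k^star({2}_{j-1}) / (2k-1)^2.\<close>
fun tstar2 :: "nat \<Rightarrow> nat \<Rightarrow> real" where
  "tstar2 n 0 = 1"
| "tstar2 n (Suc j) = (\<Sum>k=1..n. tstar2 k j / (2 * real k - 1)^2)"

end

(* Write I(m,n) for the integral of x^(2m) cos^(2n-1) x over [0, pi/2]. Integrating by parts
   twice gives I(m,1) + 2m(2m-1) I(m-1,1) = (pi/2)^(2m) and, for n >= 1,
   2n(2n+1) I(m,n) - (2n+1)^2 I(m,n+1) = 2m(2m-1) I(m-1,n+1); together these determine
   I(m,n) for all m and n >= 1 by induction on n and then m. The right-hand side satisfies the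
   same two relations: the alternating sums inherit them from the recursion
   t_(n+1)^star({2}_(j+1)) = t_n^star({2}_(j+1)) + t_(n+1)^star({2}_j) / (2n+1)^2, and the
   prefactor c_n = 4^n / (n binom(2n,n)) obeys (2n+1) c_(n+1) = 2n c_n. *)

theory Submission
  imports Defs
begin

lemma has_integral_of_real_derivative:
  fixes f f' :: "real \<Rightarrow> real"
  assumes "a \<le> b" and "\<And>x. (f has_real_derivative f' x) (at x)"
  shows "(f' has_integral (f b - f a)) {a..b}"
proof (rule fundamental_theorem_of_calculus[OF assms(1)])
  show "(f has_vector_derivative f' x) (at x within {a..b})" for x
    using has_field_derivative_at_within[OF assms(2)]
    by (simp add: has_real_derivative_iff_has_vector_derivative)
qed

lemma has_real_derivative_cos_power_sin:
  "((\<lambda>x. cos x ^ Suc q * sin x) has_real_derivative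
     (real q + 2) * cos x ^ (q + 2) - (real q + 1) * cos x ^ q) (at x)"
proof -
  have "((\<lambda>x. cos x ^ Suc q * sin x) has_real_derivative
     real (Suc q) * cos x ^ q * - sin x * sin x + cos x ^ Suc q * cos x) (at x)"
    by (auto intro!: derivative_eq_intros simp del: power_Suc)
  moreover have "real (Suc q) * cos x ^ q * - sin x * sin x + cos x ^ Suc q * cos x
      = - (real q + 1) * cos x ^ q * sin x ^ 2 + cos x ^ q * cos x ^ 2"
    by (simp add: power2_eq_square algebra_simps)
  moreover have "\<dots> = (real q + 2) * cos x ^ (q + 2) - (real q + 1) * cos x ^ q"
    unfolding sin_squared_eq by (simp add: power_add power2_eq_square algebra_simps)
  ultimately show ?thesis
    by simp
qed

definition cos_moment :: "nat \<Rightarrow> nat \<Rightarrow> real" where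
  "cos_moment m q = integral {0..pi/2} (\<lambda>x. x ^ (2*m) * cos x ^ q)"

lemma cos_moment_has_integral:
  "((\<lambda>x. x ^ (2*m) * cos x ^ q) has_integral cos_moment m q) {0..pi/2}"
  unfolding cos_moment_def
  by (intro integrable_integral integrable_continuous_interval continuous_intros)

lemma cos_moment_reduction:
  "(real q + 2) * (real q + 1) * cos_moment m q - (real q + 2)^2 * cos_moment m (q + 2)
     = 2 * real m * (2 * real m - 1) * cos_moment (m - 1) (q + 2)"
  (is "?lhs = ?rhs")
proof -
  define f where "f x = (real q + 2) * (real q + 1) * (x ^ (2*m) * cos x ^ q)
      - (real q + 2)^2 * (x ^ (2*m) * cos x ^ (q + 2))
      - 2 * real m * (2 * real m - 1) * (x ^ (2*(m - 1)) * cos x ^ (q + 2))" for x :: real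
  define g where "g x = cos x ^ Suc q * sin x" for x :: real
  \<comment> \<open>found by integrating \<open>f\<close> by parts twice; it vanishes at both ends\<close>
  define P where "P x = - (real q + 2) * x ^ (2*m) * g x
    - 2 * real m * x ^ (2*m - 1) * cos x ^ (q + 2)" for x
  have "(P has_real_derivative f x) (at x)" for x
  proof -
    have "(g has_real_derivative (real q + 2) * cos x ^ (q + 2) - (real q + 1) * cos x ^ q) (at x)"
      unfolding g_def by (rule has_real_derivative_cos_power_sin)
    then show ?thesis
      unfolding P_def f_def
      by (auto intro!: derivative_eq_intros simp del: power_Suc)
        (cases m; simp add: g_def power2_eq_square algebra_simps)
  qed
  then have "(f has_integral P (pi/2) - P 0) {0..pi/2}"
    by (intro has_integral_of_real_derivative) simp_all
  moreover have "P (pi/2) - P 0 = 0"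
    by (cases m) (simp_all add: P_def g_def)
  moreover have "(f has_integral ?lhs - ?rhs) {0..pi/2}"
    unfolding f_def by (intro has_integral_diff has_integral_mult_right cos_moment_has_integral)
  ultimately have "?lhs - ?rhs = 0"
    using has_integral_unique by metis
  then show ?thesis
    by simp
qed

lemma cos_moment_one:
  "cos_moment m 1 + 2 * real m * (2 * real m - 1) * cos_moment (m - 1) 1 = (pi/2) ^ (2*m)"
  (is "?lhs = _")
proof -
  define f where "f x = x ^ (2*m) * cos x ^ 1
      + 2 * real m * (2 * real m - 1) * (x ^ (2*(m - 1)) * cos x ^ 1)"
    for x :: real
  define P where "P x = x ^ (2*m) * sin x + 2 * real m * x ^ (2*m - 1) * cos x" for x :: real
  have "(P has_real_derivative f x) (at x)" for x
    unfolding P_def f_def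
    by (auto intro!: derivative_eq_intros) (cases m; simp add: algebra_simps)
  then have "(f has_integral P (pi/2) - P 0) {0..pi/2}"
    by (intro has_integral_of_real_derivative) simp_all
  moreover have "P (pi/2) - P 0 = (pi/2) ^ (2*m)"
    by (cases m) (simp_all add: P_def)
  moreover have "(f has_integral ?lhs) {0..pi/2}"
    unfolding f_def by (intro has_integral_add has_integral_mult_right cos_moment_has_integral)
  ultimately show ?thesis
    using has_integral_unique by metis
qed

lemma tstar2_Suc_Suc:
  "tstar2 (Suc n) (Suc j) = tstar2 n (Suc j) + tstar2 (Suc n) j / (2 * real n + 1)^2"
  by (simp add: algebra_simps)

definition tstar2_alt_sum :: "nat \<Rightarrow> nat \<Rightarrow> real" where
  "tstar2_alt_sum m n =
     (\<Sum>j=0..m. (-1) ^ j * tstar2 n j / fact (2*m - 2*j) * (pi/2) ^ (2*m - 2*j))"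

lemma tstar2_alt_sum_0: "tstar2_alt_sum 0 n = 1"
  by (simp add: tstar2_alt_sum_def)

lemma tstar2_alt_sum_Suc:
  "tstar2_alt_sum (Suc m) n = (pi/2) ^ (2 * Suc m) / fact (2 * Suc m)
     - (\<Sum>j=0..m. (-1) ^ j * tstar2 n (Suc j) / fact (2*m - 2*j) * (pi/2) ^ (2*m - 2*j))"
  unfolding tstar2_alt_sum_def sum.atLeast0_atMost_Suc_shift
  by (simp add: sum_negf mult.commute del: tstar2.simps(2))

lemma tstar2_alt_sum_Suc_0:
  "tstar2_alt_sum (Suc m) 0 = (pi/2) ^ (2 * Suc m) / fact (2 * Suc m)"
  by (simp add: tstar2_alt_sum_Suc)

lemma tstar2_alt_sum_Suc_Suc:
  "tstar2_alt_sum (Suc m) (Suc n)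
     = tstar2_alt_sum (Suc m) n - tstar2_alt_sum m (Suc n) / (2 * real n + 1)^2"
  unfolding tstar2_alt_sum_Suc tstar2_Suc_Suc
  by (simp add: tstar2_alt_sum_def sum.distrib sum_divide_distrib algebra_simps add_divide_distrib)

lemma central_binomial_Suc:
  "Suc n * (2 * Suc n choose Suc n) = 2 * ((2*n + 1) * (2*n choose n))"
proof -
  have "Suc n * (2 * Suc n choose Suc n) = 2 * (Suc n * (2*n + 1 choose n))"
    using Suc_times_binomial[of n "2*n + 1"] by (simp add: algebra_simps del: binomial_Suc_Suc)
  also have "Suc n * (2*n + 1 choose n) = (2*n + 1) * (2*n choose n)"
    using binomial_absorb_comp[of "2*n + 1" n] by (simp add: algebra_simps del: binomial_Suc_Suc)
  finally show ?thesis .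
qed

definition wallis_coeff :: "nat \<Rightarrow> real" where
  "wallis_coeff n = 4 ^ n / (real n * real (2*n choose n))"

lemma wallis_coeff_Suc:
  assumes "n \<ge> 1"
  shows "(2 * real n + 1) * wallis_coeff (Suc n) = 2 * real n * wallis_coeff n"
proof -
  define B where "B = real (2*n choose n)"
  have "wallis_coeff (Suc n) = 4 * 4 ^ n / real (Suc n * (2 * Suc n choose Suc n))"
    by (simp only: wallis_coeff_def of_nat_mult power_Suc)
  also have "\<dots> = 4 * 4 ^ n / (2 * ((2 * real n + 1) * B))"
    unfolding central_binomial_Suc B_def by (simp add: algebra_simps)
  also have "\<dots> = 2 * 4 ^ n / ((2 * real n + 1) * B)"
    by simp
  finally show ?thesis
    using assms unfolding wallis_coeff_def[of n] B_def by simp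
qed

text \<open>At \<open>m = 0\<close> the coefficient \<open>2m(2m - 1)\<close> vanishes, so the junk value
  \<open>G (0 - 1) = G 0\<close> is harmless.\<close>
definition moment_recursion :: "(nat \<Rightarrow> nat \<Rightarrow> real) \<Rightarrow> bool" where
  "moment_recursion G \<longleftrightarrow>
     (\<forall>m. G m 1 + 2 * real m * (2 * real m - 1) * G (m - 1) 1 = (pi/2) ^ (2*m)) \<and>
     (\<forall>m n. n \<ge> 1 \<longrightarrow>
        2 * real n * (2 * real n + 1) * G m n - (2 * real n + 1)^2 * G m (Suc n)
          = 2 * real m * (2 * real m - 1) * G (m - 1) (Suc n))"

lemma moment_recursionD:
  assumes "moment_recursion G"
  shows "G m 1 = (pi/2) ^ (2*m) - 2 * real m * (2 * real m - 1) * G (m - 1) 1"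
    and "n \<ge> 1 \<Longrightarrow> G m (Suc n) = (2 * real n * (2 * real n + 1) * G m n
           - 2 * real m * (2 * real m - 1) * G (m - 1) (Suc n)) / (2 * real n + 1)^2"
  using assms unfolding moment_recursion_def
  by (simp_all add: field_simps eq_diff_eq)

lemma moment_recursion_unique:
  assumes G: "moment_recursion G" and H: "moment_recursion H" and "n \<ge> 1"
  shows "G m n = H m n"
  using \<open>n \<ge> 1\<close>
proof (induction n arbitrary: m rule: nat_induct_at_least)
  case base
  show ?case
  proof (induction m)
    case 0
    show ?case
      using moment_recursionD(1)[OF G, of 0] moment_recursionD(1)[OF H, of 0] by simp
  next
    case (Suc m)
    then show ?case
      using moment_recursionD(1)[OF G, of "Suc m"] moment_recursionD(1)[OF H, of "Suc m"] by simp
  qed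
next
  case (Suc n)
  note column = Suc.IH
  show ?case
  proof (induction m)
    case 0
    show ?case
      using moment_recursionD(2)[OF G, of n 0] moment_recursionD(2)[OF H, of n 0] column[of 0] Suc.hyps
      by simp
  next
    case (Suc m)
    then show ?case
      using moment_recursionD(2)[OF G, of n "Suc m"] moment_recursionD(2)[OF H, of n "Suc m"]
        column[of "Suc m"] \<open>n \<ge> 1\<close>
      by simp
  qed
qed

lemma moment_recursion_cos_moment: "moment_recursion (\<lambda>m n. cos_moment m (2*n - 1))"
  unfolding moment_recursion_def
proof (intro conjI allI impI)
  show "cos_moment m (2*1 - 1) + 2 * real m * (2 * real m - 1) * cos_moment (m - 1) (2*1 - 1)
      = (pi/2) ^ (2*m)" for m
    using cos_moment_one[of m] by simp
next
  fix m n :: nat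
  assume "n \<ge> 1"
  then have "2 * Suc n - 1 = (2*n - 1) + 2" "real (2*n - 1) = 2 * real n - 1"
    by auto
  then show "2 * real n * (2 * real n + 1) * cos_moment m (2*n - 1)
      - (2 * real n + 1)^2 * cos_moment m (2 * Suc n - 1)
      = 2 * real m * (2 * real m - 1) * cos_moment (m - 1) (2 * Suc n - 1)"
    using cos_moment_reduction[of "2*n - 1" m] by (simp add: algebra_simps)
qed

definition moment_closed_form :: "nat \<Rightarrow> nat \<Rightarrow> real" where
  "moment_closed_form m n = fact (2*m) / 2 * wallis_coeff n * tstar2_alt_sum m n"

lemma moment_recursion_closed_form: "moment_recursion moment_closed_form"
  unfolding moment_recursion_def
proof (intro conjI allI impI)
  fix m :: nat
  show "moment_closed_form m 1 + 2 * real m * (2 * real m - 1) * moment_closed_form (m - 1) 1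
      = (pi/2) ^ (2*m)"
  proof (cases m)
    case 0
    then show ?thesis
      by (simp add: moment_closed_form_def wallis_coeff_def tstar2_alt_sum_0)
  next
    case (Suc k)
    have "tstar2_alt_sum (Suc k) 1 + tstar2_alt_sum k 1 = (pi/2) ^ (2 * Suc k) / fact (2 * Suc k)"
      using tstar2_alt_sum_Suc_Suc[of k 0] by (simp add: tstar2_alt_sum_Suc_0)
    moreover have "moment_closed_form (Suc k) 1
        + 2 * real (Suc k) * (2 * real (Suc k) - 1) * moment_closed_form k 1
        = fact (2 * Suc k) * (tstar2_alt_sum (Suc k) 1 + tstar2_alt_sum k 1)"
      by (simp add: moment_closed_form_def wallis_coeff_def algebra_simps)
    ultimately show ?thesis
      unfolding Suc by simp
  qed
next
  fix m n :: nat
  assume "n \<ge> 1"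
  define p where "p = 2 * real n + 1"
  have W: "2 * real n * wallis_coeff n = p * wallis_coeff (Suc n)"
    using wallis_coeff_Suc[OF \<open>n \<ge> 1\<close>] by (simp add: p_def)
  show "2 * real n * (2 * real n + 1) * moment_closed_form m n
      - (2 * real n + 1)^2 * moment_closed_form m (Suc n)
      = 2 * real m * (2 * real m - 1) * moment_closed_form (m - 1) (Suc n)"
  proof (cases m)
    case 0
    have "2 * real n * p * moment_closed_form 0 n - p^2 * moment_closed_form 0 (Suc n)
        = p / 2 * (2 * real n * wallis_coeff n - p * wallis_coeff (Suc n))"
      by (simp add: moment_closed_form_def tstar2_alt_sum_0 power2_eq_square algebra_simps)
    then show ?thesis
      unfolding 0 W p_def by simp
  next
    case (Suc k)
    have "p \<noteq> 0"
      by (simp add: p_def)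
    have "2 * real n * p * moment_closed_form (Suc k) n - p^2 * moment_closed_form (Suc k) (Suc n)
        = fact (2 * Suc k) / 2 * (p * (2 * real n * wallis_coeff n) * tstar2_alt_sum (Suc k) n
            - p^2 * wallis_coeff (Suc n) * tstar2_alt_sum (Suc k) (Suc n))"
      by (simp add: moment_closed_form_def algebra_simps del: fact_Suc)
    also have "\<dots> = fact (2 * Suc k) / 2 * wallis_coeff (Suc n)
        * (p^2 * (tstar2_alt_sum (Suc k) n - tstar2_alt_sum (Suc k) (Suc n)))"
      unfolding W by (simp add: power2_eq_square algebra_simps)
    also have "\<dots> = fact (2 * Suc k) / 2 * wallis_coeff (Suc n) * tstar2_alt_sum k (Suc n)"
      using \<open>p \<noteq> 0\<close> by (simp add: tstar2_alt_sum_Suc_Suc p_def)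
    also have "\<dots> = 2 * real (Suc k) * (2 * real (Suc k) - 1) * moment_closed_form k (Suc n)"
      by (simp add: moment_closed_form_def algebra_simps)
    finally show ?thesis
      unfolding Suc p_def by simp
  qed
qed

theorem lemma3:
  fixes m n :: nat
  assumes "n \<ge> 1"
  shows "integral {0..pi/2} (\<lambda>x. x ^ (2*m) * cos x ^ (2*n - 1)) =
    fact (2*m) / 2 * (4 ^ n / (real n * real (2*n choose n))) *
    (\<Sum>j=0..m. (-1) ^ j * tstar2 n j / fact (2*m - 2*j) * (pi/2) ^ (2*m - 2*j))"
proof -
  have "cos_moment m (2*n - 1) = moment_closed_form m n"
    by (rule moment_recursion_unique[OF moment_recursion_cos_moment moment_recursion_closed_form assms])
  then show ?thesis
    by (simp add: cos_moment_def moment_closed_form_def wallis_coeff_def tstar2_alt_sum_def)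
qed

end
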